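(* Let $p$ be a prime, $m,t\ge 1$, $B=\mathrm{GF}(p^m)$ and $F=\mathrm{GF}(p^{mt})$, and assume that $t$ is divisible by $p$ (the characteristic of $F$). Let $n=|F|=|B|^t$, $k=n(1-1/|B|)$, and let $\mathcal{C}=\mathrm{RS}(F,k)=\{(f(\alpha))_{\alpha\in F} : f\in F[x],\ \deg f<k\}$, where the symbol $f(\alpha)$ is stored at the node indexed by $\alpha$. Then for any two distinct $\alpha^*,\overline{\alpha}\in F$ whose symbols are erased, there is a distributed repair scheme (Distributed Repair Scheme II) with total repair bandwidth $2(n-1)$ sub-symbols (elements of $B$): each of the two replacement nodes (for $f(\alpha^* )$ and for $f(\overline{\alpha})$) downloads one sub-symbol from each of the $n-2$ surviving nodes (computed from that node's stored symbol) and one sub-symbol from the other replacement node (computed from the data that replacement node has downloaded from the surviving nodes), and from these $n-1$ sub-symbols recovers its erased symbol.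
   Context: Elements of $F$ are called symbols and elements of $B$ sub-symbols. The trace is $\mathrm{Tr}_{F/B}(x)=\sum_{i=0}^{t-1}x^{|B|^i}$. In distributed repair, each erased symbol is reconstructed at its own replacement node; the replacement nodes download data from the surviving nodes and may also exchange data among themselves. The repair bandwidth is the total number of sub-symbols downloaded by all replacement nodes. *)

theory Defs
  imports "HOL-Computational_Algebra.Polynomial" "HOL-Library.Cardinality"
begin

text \<open>The subfield B = GF(p^m) of a field F = GF(p^(m t)), realised as the set of
  fixed points of the Frobenius power x \<mapsto> x^(p^m).\<close>
definition subfield_GF :: "nat \<Rightarrow> nat \<Rightarrow> 'a::field set" where
  "subfield_GF p m = {x. x ^ (p ^ m) = x}"

definition trace_FB :: "nat \<Rightarrow> nat \<Rightarrow> 'a::field \<Rightarrow> 'a" where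
  "trace_FB q t x = (\<Sum>i<t. x ^ (q ^ i))"

definition RS_code :: "nat \<Rightarrow> ('a::{field,finite} \<Rightarrow> 'a) set" where
  "RS_code k = {(\<lambda>\<alpha>. poly f \<alpha>) | f. degree f < k}"

text \<open>Each surviving node beta sends one sub-symbol g1 beta (c beta)
  to replacement node 1 and one sub-symbol g2 beta (c beta) to replacement node 2.
  Replacement node i then sends one sub-symbol h_i (computed from its downloads) to the
  other replacement node.  Node 1 recovers c a1 from its downloads plus the sub-symbol
  from node 2 (and symmetrically).  Downloads are modelled as functions on nodes, set
  to 0 outside the set of surviving nodes, so only surviving data is used.\<close>
definition distributed_repair_two ::
  "'a::{field,finite} set \<Rightarrow> ('a \<Rightarrow> 'a) set \<Rightarrow> 'a \<Rightarrow> 'a \<Rightarrow> bool" where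
  "distributed_repair_two B C a1 a2 \<longleftrightarrow>
    (\<exists>(g1::'a \<Rightarrow> 'a \<Rightarrow> 'a) (g2::'a \<Rightarrow> 'a \<Rightarrow> 'a)
       (h1::('a \<Rightarrow> 'a) \<Rightarrow> 'a) (h2::('a \<Rightarrow> 'a) \<Rightarrow> 'a)
       (r1::('a \<Rightarrow> 'a) \<Rightarrow> 'a \<Rightarrow> 'a) (r2::('a \<Rightarrow> 'a) \<Rightarrow> 'a \<Rightarrow> 'a).
       (\<forall>\<beta> x. g1 \<beta> x \<in> B \<and> g2 \<beta> x \<in> B) \<and>
       (\<forall>d. h1 d \<in> B \<and> h2 d \<in> B) \<and>
       (\<forall>c\<in>C.
          let S = UNIV - {a1, a2};
              d1 = (\<lambda>\<beta>. if \<beta> \<in> S then g1 \<beta> (c \<beta>) else 0);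
              d2 = (\<lambda>\<beta>. if \<beta> \<in> S then g2 \<beta> (c \<beta>) else 0)
          in r1 d1 (h2 d2) = c a1 \<and> r2 d2 (h1 d1) = c a2))"

text \<open>Total bandwidth (in sub-symbols) of such a scheme: each replacement node downloads
  one sub-symbol per surviving node plus one from the other replacement node.\<close>
definition repair_two_bandwidth :: "'a::finite \<Rightarrow> 'a \<Rightarrow> nat" where
  "repair_two_bandwidth a1 a2 = 2 * (card (UNIV - {a1, a2}) + 1)"

end

theory Submission imports Defs "HOL-Number_Theory.Residues" "HOL-Computational_Algebra.Primes"
begin

text \<open>The surviving node \<open>\<beta>\<close> sends to the replacement node of \<open>a\<close> the sub-symbol
  \<open>Tr(f(\<beta>)/(\<beta> - a))\<close>.  The polynomial \<open>G(x) = Tr(b (x - a))/(x - a)\<close> has degree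
  \<open>q ^ (t - 1) - 1\<close> and \<open>G(a) = b\<close>, so for \<open>deg f < n - n/q\<close> the sum of \<open>f G\<close> over \<open>F\<close>
  vanishes, which after taking traces gives the Guruswami--Wootters identity
  \<open>Tr(b f(a)) = - (\<Sum>x\<noteq>a. Tr(b (x - a)) Tr(f(x)/(x - a)))\<close> for every \<open>b\<close>;
  by nondegeneracy of the trace form these values determine \<open>f(a)\<close>.
  The replacement node of \<open>a\<close> lacks only the term from the other erased node \<open>a'\<close>,
  i.e. \<open>Tr(f(a')/(a' - a))\<close>.  The replacement node of \<open>a'\<close> computes exactly this value from its
  own downloads by the identity at \<open>a'\<close> with \<open>b = 1/(a' - a)\<close>: there the term of the missing
  node \<open>a\<close> carries the factor \<open>Tr(-1) = -t = 0\<close>, because \<open>p\<close> divides \<open>t\<close>.\<close>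

hide_const (open) UnivPoly.coeff UnivPoly.monom Module.smult

lemma CHAR_eq_prime_of_card:
  assumes "prime p" and "CARD('a::{field,finite}) = p ^ k" and "k \<ge> 1"
  shows "CHAR('a) = p"
proof -
  have "prime CHAR('a)"
    by (rule prime_CHAR_semidom) (simp add: finite_imp_CHAR_pos)
  moreover have "CHAR('a) dvd p ^ k"
    using CHAR_dvd_CARD[where 'a='a] assms(2) by simp
  ultimately show ?thesis
    using assms(1) by (metis prime_dvd_power primes_dvd_imp_eq)
qed

lemma of_nat_CARD_eq_0: "of_nat CARD('a::{field,finite}) = (0::'a)"
  using CHAR_dvd_CARD[where 'a='a] of_nat_eq_0_iff_char_dvd by blast

lemma power_CARD_eq_self: "(x::'a::{field,finite}) ^ CARD('a) = x"
proof (cases "x = 0")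
  case False
  define G where "G = \<lparr>carrier = UNIV - {0::'a}, monoid.mult = (*) :: 'a \<Rightarrow> 'a \<Rightarrow> 'a, one = 1\<rparr>"
  interpret group G
    by (rule groupI) (auto simp: G_def intro!: bexI[of _ "inverse _"])
  have pow: "y [^]\<^bsub>G\<^esub> n = y ^ n" for y and n :: nat
    by (induction n) (simp_all add: nat_pow_def G_def)
  have "x [^]\<^bsub>G\<^esub> order G = \<one>\<^bsub>G\<^esub>"
    by (rule pow_order_eq_1) (simp add: G_def False)
  hence "x ^ (CARD('a) - 1) = 1"
    unfolding pow by (simp add: order_def G_def card_Diff_singleton)
  hence "x * x ^ (CARD('a) - 1) = x" by simp
  thus ?thesis
    using finite_UNIV_card_ge_0[where 'a='a] by (simp flip: power_Suc)
qed simp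

lemma sum_UNIV_power_eq_0:
  assumes "j < CARD('a::{field,finite}) - 1"
  shows "(\<Sum>x\<in>UNIV. (x::'a) ^ j) = 0"
proof (cases "j = 0")
  case True
  thus ?thesis by (simp add: of_nat_CARD_eq_0)
next
  case False
  \<comment> \<open>\<open>X ^ j - 1\<close> has at most \<open>j\<close> roots, so some unit \<open>a\<close> has \<open>a ^ j \<noteq> 1\<close>;
    the sum is invariant under \<open>x \<mapsto> a x\<close>.\<close>
  have "\<exists>a::'a. a \<noteq> 0 \<and> a ^ j \<noteq> 1"
  proof (rule ccontr)
    assume "\<not> ?thesis"
    hence sub: "UNIV - {0} \<subseteq> {x::'a. poly (monom 1 j - 1) x = 0}"
      by (auto simp: poly_monom)
    have nz: "monom (1::'a) j - 1 \<noteq> 0"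
    proof
      assume "monom (1::'a) j - 1 = 0"
      hence "coeff (monom (1::'a) j - 1) j = 0" by simp
      thus False using False by (simp add: coeff_monom)
    qed
    have "degree (monom (1::'a) j - 1) \<le> j"
      by (rule degree_le) (auto simp: coeff_monom)
    hence "card {x::'a. poly (monom 1 j - 1) x = 0} \<le> j"
      using card_poly_roots_bound[OF nz] by linarith
    moreover have "card (UNIV - {0::'a}) \<le> card {x::'a. poly (monom 1 j - 1) x = 0}"
      by (rule card_mono[OF _ sub]) simp
    ultimately show False
      using assms by (simp add: card_Diff_singleton)
  qed
  then obtain a :: 'a where a: "a \<noteq> 0" "a ^ j \<noteq> 1" by blast
  have "(\<Sum>x\<in>UNIV. (a * x) ^ j) = (\<Sum>x\<in>UNIV. x ^ j)"
    by (rule sum.reindex_bij_witness[of _ "\<lambda>y. y / a" "\<lambda>y. a * y"]) (use a in auto)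
  hence "a ^ j * (\<Sum>x\<in>UNIV. x ^ j) = 1 * (\<Sum>x\<in>UNIV. x ^ j)"
    by (simp add: power_mult_distrib sum_distrib_left)
  thus ?thesis using a(2) by (metis mult_cancel_right)
qed

lemma sum_UNIV_poly_eq_0:
  assumes "degree P < CARD('a::{field,finite}) - 1"
  shows "(\<Sum>x\<in>UNIV. poly P (x::'a)) = 0"
proof -
  have "(\<Sum>x\<in>UNIV. poly P (x::'a)) = (\<Sum>x\<in>UNIV. \<Sum>i\<le>degree P. coeff P i * x ^ i)"
    by (simp add: poly_altdef)
  also have "\<dots> = (\<Sum>i\<le>degree P. coeff P i * (\<Sum>x\<in>UNIV. x ^ i))"
    by (subst sum.swap) (simp add: sum_distrib_left)
  also have "\<dots> = 0"
    using assms by (intro sum.neutral) (auto simp: sum_UNIV_power_eq_0)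
  finally show ?thesis .
qed

lemma repair_two_bandwidth_eq:
  assumes "a1 \<noteq> (a2::'a::finite)"
  shows "repair_two_bandwidth a1 a2 = 2 * (CARD('a) - 1)"
proof -
  have "card {a1, a2} \<le> CARD('a)" by (rule card_mono) auto
  thus ?thesis
    using assms by (simp add: repair_two_bandwidth_def card_Diff_subset)
qed

locale subfield_trace =
  fixes p m t q :: nat and field :: "'a::{field,finite} itself"
  assumes prime_p: "prime p" and m_ge_1: "m \<ge> 1" and t_ge_1: "t \<ge> 1"
    and card_field: "CARD('a) = p ^ (m * t)" and q_def: "q = p ^ m"
begin

abbreviation T :: "'a \<Rightarrow> 'a" where "T \<equiv> trace_FB q t"

abbreviation B :: "'a set" where "B \<equiv> subfield_GF p m"

lemma CHAR_eq: "CHAR('a) = p"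
  using CHAR_eq_prime_of_card[OF prime_p card_field] m_ge_1 t_ge_1 by simp

lemma CARD_eq: "CARD('a) = q ^ t"
  using card_field q_def by (simp add: power_mult)

lemma q_ge_2: "q \<ge> 2"
proof -
  have "p ^ 1 \<le> p ^ m"
    using m_ge_1 prime_gt_0_nat[OF prime_p] by (intro power_increasing) auto
  thus ?thesis using q_def prime_ge_2_nat[OF prime_p] by simp
qed

lemma power_q_power_add: "((x::'a) + y) ^ (q ^ i) = x ^ (q ^ i) + y ^ (q ^ i)"
  using freshmans_dream'[of "q ^ i" "m * i" x y] prime_p
  by (simp add: CHAR_eq q_def power_mult)

lemma power_q_power_sum: "(sum f A :: 'a) ^ (q ^ i) = (\<Sum>j\<in>A. f j ^ (q ^ i))"
  using freshmans_dream_sum'[of "q ^ i" "m * i" f A] prime_p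
  by (simp add: CHAR_eq q_def power_mult)

lemma subfield_GF_iff: "b \<in> B \<longleftrightarrow> b ^ q = b"
  by (simp add: subfield_GF_def q_def)

lemma power_q_power_subfield: "b \<in> B \<Longrightarrow> b ^ (q ^ i) = b"
  by (induction i) (simp_all add: subfield_GF_iff power_mult)

lemma trace_add: "T (x + y) = T x + T y"
  by (simp add: trace_FB_def power_q_power_add sum.distrib)

lemma trace_zero: "T 0 = 0"
  using q_ge_2 by (simp add: trace_FB_def power_0_left)

lemma trace_sum: "T (sum f A) = (\<Sum>j\<in>A. T (f j))"
  by (induction A rule: infinite_finite_induct) (simp_all add: trace_zero trace_add)

lemma trace_uminus: "T (- x) = - T x"
  using trace_add[of x "- x"] by (simp add: trace_zero eq_neg_iff_add_eq_0 add.commute)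

lemma trace_diff: "T (x - y) = T x - T y"
  using trace_add[of x "- y"] by (simp add: trace_uminus)

lemma trace_mult_subfield: "b \<in> B \<Longrightarrow> T (b * x) = b * T x"
  by (simp add: trace_FB_def power_mult_distrib power_q_power_subfield sum_distrib_left)

lemma trace_one: "T 1 = of_nat t"
  by (simp add: trace_FB_def)

lemma trace_in_subfield: "T x \<in> B"
proof -
  have "x ^ (q ^ t) = x"
    using power_CARD_eq_self[of x] by (simp add: CARD_eq)
  have "(T x) ^ q = (\<Sum>i<t. (x ^ (q ^ i)) ^ q)"
    unfolding trace_FB_def using power_q_power_sum[of _ _ 1] by simp
  also have "\<dots> = (\<Sum>i<t. x ^ (q ^ Suc i))"
    by (simp only: power_mult[symmetric] power_Suc2)
  also have "\<dots> = T x"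
  proof -
    have "(\<Sum>i<t. x ^ (q ^ Suc i)) + x ^ (q ^ 0) = (\<Sum>i<Suc t. x ^ (q ^ i))"
      by (simp only: sum.lessThan_Suc_shift add.commute)
    also have "\<dots> = T x + x ^ (q ^ t)"
      by (simp add: trace_FB_def)
    finally show ?thesis
      using \<open>x ^ (q ^ t) = x\<close> by simp
  qed
  finally show ?thesis by (simp add: subfield_GF_iff)
qed

lemma trace_mult_trace: "T (T y * x) = T y * T x"
  by (rule trace_mult_subfield[OF trace_in_subfield])

text \<open>\<open>T\<close> is evaluation of a nonzero polynomial of degree \<open>q ^ (t - 1) < |F|\<close>.\<close>
lemma trace_not_identically_zero: "\<exists>z. T z \<noteq> 0"
proof (rule ccontr)
  assume vanishes: "\<not> ?thesis"
  define P where "P = (\<Sum>i<t. monom (1::'a) (q ^ i))"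
  have roots: "{x. poly P x = 0} = UNIV"
    using vanishes by (auto simp: P_def poly_sum poly_monom trace_FB_def)
  have "coeff P (q ^ (t - 1)) = (\<Sum>i\<in>{t - 1}. 1)"
    unfolding P_def coeff_sum coeff_monom
    by (rule sum.mono_neutral_cong_right) (use t_ge_1 q_ge_2 in \<open>auto simp: power_inject_exp\<close>)
  hence "P \<noteq> 0" by auto
  have "degree P \<le> q ^ (t - 1)"
  proof (rule degree_le, intro allI impI)
    fix j assume "q ^ (t - 1) < j"
    moreover have "q ^ i \<le> q ^ (t - 1)" if "i < t" for i
      using that q_ge_2 by (intro power_increasing) auto
    ultimately show "coeff P j = 0"
      by (auto simp: P_def coeff_sum intro!: sum.neutral) (meson leD)
  qed
  moreover have "q ^ (t - 1) < q ^ t"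
    using q_ge_2 t_ge_1 by (intro power_strict_increasing) auto
  ultimately show False
    using card_poly_roots_bound[OF \<open>P \<noteq> 0\<close>] roots CARD_eq by simp
qed

lemma trace_form_eqD:
  assumes "\<And>b. T (b * y) = T (b * y')"
  shows "y = y'"
proof (rule ccontr)
  assume "y \<noteq> y'"
  obtain z where "T z \<noteq> 0" using trace_not_identically_zero by blast
  have "T ((z / (y - y')) * (y - y')) = 0"
    using assms[of "z / (y - y')"] by (simp add: right_diff_distrib trace_diff)
  thus False using \<open>y \<noteq> y'\<close> \<open>T z \<noteq> 0\<close> by simp
qed

end

text \<open>\<open>Tr(b (x - a))/(x - a) = (\<Sum>i<t. b ^ q ^ i * (x - a) ^ (q ^ i - 1))\<close> as a polynomial in \<open>x\<close>.\<close>
definition repair_poly :: "nat \<Rightarrow> nat \<Rightarrow> 'a::field \<Rightarrow> 'a \<Rightarrow> 'a poly" where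
  "repair_poly q t a b = (\<Sum>i<t. smult (b ^ (q ^ i)) ([:- a, 1:] ^ (q ^ i - 1)))"

context subfield_trace
begin

lemma poly_repair_poly:
  assumes "x \<noteq> a"
  shows "poly (repair_poly q t a b) x = T (b * (x - a)) / (x - a)"
proof -
  have "q ^ i > 0" for i using q_ge_2 by simp
  hence "poly (repair_poly q t a b) x * (x - a) = (\<Sum>i<t. (b * (x - a)) ^ (q ^ i))"
    by (simp add: repair_poly_def poly_sum sum_distrib_right mult.assoc power_mult_distrib
        flip: power_Suc2)
  thus ?thesis
    using assms by (simp add: trace_FB_def eq_divide_eq)
qed

lemma poly_repair_poly_same: "poly (repair_poly q t a b) a = (b::'a)"
proof -
  obtain t' where t': "t = Suc t'" using t_ge_1 by (cases t) auto
  have zero_pow: "(0::'a) ^ (q ^ Suc i - 1) = 0" for i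
  proof -
    have "q ^ 1 \<le> q ^ Suc i"
      using q_ge_2 by (intro power_increasing) auto
    hence "q ^ Suc i - 1 > 0" using q_ge_2 unfolding power_one_right by linarith
    thus ?thesis by simp
  qed
  have "poly (repair_poly q t a b) a = b + (\<Sum>i<t'. b ^ (q ^ Suc i) * 0 ^ (q ^ Suc i - 1))"
    by (simp add: repair_poly_def poly_sum t' sum.lessThan_Suc_shift del: sum.lessThan_Suc power_Suc)
  also have "\<dots> = b"
    by (simp only: zero_pow mult_zero_right sum.neutral_const add_0_right)
  finally show ?thesis .
qed

lemma degree_repair_poly: "degree (repair_poly q t a b) \<le> q ^ (t - 1) - 1"
  unfolding repair_poly_def
proof (rule degree_sum_le)
  fix i assume "i \<in> {..<t}"
  hence "q ^ i \<le> q ^ (t - 1)"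
    using q_ge_2 by (intro power_increasing) auto
  thus "degree (smult (b ^ (q ^ i)) ([:- a, 1:] ^ (q ^ i - 1))) \<le> q ^ (t - 1) - 1"
    by (metis degree_smult_le degree_linear_power diff_le_mono order.trans)
qed simp

lemma trace_repair_identity:
  assumes deg: "degree f < CARD('a) - CARD('a) div q"
  shows "T (b * poly f a) = - (\<Sum>x\<in>UNIV - {a}. T (b * (x - a)) * T (poly f x / (x - a)))"
proof -
  define G where "G = repair_poly q t a b"
  define N where "N = q ^ (t - 1)"
  have card_N: "CARD('a) = q * N"
    using CARD_eq t_ge_1 by (simp add: N_def flip: power_Suc)
  have "degree (f * G) \<le> degree f + (N - 1)"
    using degree_mult_le[of f G] degree_repair_poly[of a b] unfolding G_def N_def by linarith
  moreover have "N \<ge> 1" "CARD('a) div q = N" "2 * N \<le> q * N"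
    using q_ge_2 card_N by (simp_all add: N_def)
  ultimately have "degree (f * G) < CARD('a) - 1"
    using deg card_N by linarith
  hence "(\<Sum>x\<in>UNIV. poly (f * G) x) = 0"
    by (rule sum_UNIV_poly_eq_0)
  hence "b * poly f a = - (\<Sum>x\<in>UNIV - {a}. poly f x * poly G x)"
    by (simp add: sum.remove[of UNIV a] G_def poly_repair_poly_same mult.commute
        eq_neg_iff_add_eq_0)
  also have "\<dots> = - (\<Sum>x\<in>UNIV - {a}. T (b * (x - a)) * (poly f x / (x - a)))"
    by (intro arg_cong[of _ _ uminus] sum.cong) (auto simp: G_def poly_repair_poly)
  finally show ?thesis
    by (simp only: trace_uminus trace_sum trace_mult_trace)
qed

lemma trace_repair_identity_split:
  assumes "degree f < CARD('a) - CARD('a) div q" and "a \<noteq> b"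
  shows "T (z * poly f a) = - (\<Sum>x\<in>UNIV - {a, b}. T (z * (x - a)) * T (poly f x / (x - a)))
           - T (z * (b - a)) * T (poly f b / (b - a))"
proof -
  have "UNIV - {a} = insert b (UNIV - {a, b})" "b \<notin> UNIV - {a, b}"
    using assms(2) by auto
  thus ?thesis
    using trace_repair_identity[OF assms(1), of z a] by simp
qed

end

definition repair_download :: "nat \<Rightarrow> nat \<Rightarrow> 'a::field \<Rightarrow> 'a \<Rightarrow> 'a \<Rightarrow> 'a" where
  "repair_download q t a \<beta> y = trace_FB q t (y / (\<beta> - a))"

text \<open>Computed by the replacement node of \<open>a\<close> from its downloads \<open>d\<close>, for the replacement
  node of \<open>b\<close>.  On honest downloads the value already lies in \<open>B\<close>; the test only makes
  the sub-symbol lie in \<open>B\<close> for arbitrary \<open>d\<close>, as the scheme requires.\<close>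
definition repair_relay ::
    "nat \<Rightarrow> nat \<Rightarrow> nat \<Rightarrow> nat \<Rightarrow> 'a::{field,finite} \<Rightarrow> 'a \<Rightarrow> ('a \<Rightarrow> 'a) \<Rightarrow> 'a" where
  "repair_relay p m q t a b d =
    (let v = - (\<Sum>x\<in>UNIV - {a, b}. trace_FB q t ((x - a) / (a - b)) * d x)
     in if v \<in> subfield_GF p m then v else 0)"

text \<open>The symbol is the unique \<open>y\<close> with the traces \<open>Tr(z y)\<close> predicted by the repair identity.\<close>
definition repair_recover ::
    "nat \<Rightarrow> nat \<Rightarrow> 'a::{field,finite} \<Rightarrow> 'a \<Rightarrow> ('a \<Rightarrow> 'a) \<Rightarrow> 'a \<Rightarrow> 'a" where
  "repair_recover q t a b d e =
    (SOME y. \<forall>z. trace_FB q t (z * y) =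
       - (\<Sum>x\<in>UNIV - {a, b}. trace_FB q t (z * (x - a)) * d x) - trace_FB q t (z * (b - a)) * e)"

context subfield_trace
begin

lemma repair_relay_correct:
  assumes "p dvd t" and "a \<noteq> b" and deg: "degree f < CARD('a) - CARD('a) div q"
    and d: "\<forall>x\<in>UNIV - {a, b}. d x = T (poly f x / (x - a))"
  shows "repair_relay p m q t a b d = T (poly f a / (a - b))"
proof -
  have "T (- 1) = 0"
    using \<open>p dvd t\<close> by (simp add: trace_uminus trace_one of_nat_eq_0_iff_char_dvd CHAR_eq)
  moreover have "1 / (a - b) * (b - a) = - 1"
    using \<open>a \<noteq> b\<close> by (simp add: field_simps)
  ultimately have "T (poly f a / (a - b))
      = - (\<Sum>x\<in>UNIV - {a, b}. T ((x - a) / (a - b)) * d x)"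
    using trace_repair_identity_split[OF deg \<open>a \<noteq> b\<close>, of "1 / (a - b)"] d by simp
  moreover have "T (poly f a / (a - b)) \<in> B"
    by (rule trace_in_subfield)
  ultimately show ?thesis
    by (simp add: repair_relay_def Let_def)
qed

lemma repair_recover_correct:
  assumes "a \<noteq> b" and deg: "degree f < CARD('a) - CARD('a) div q"
    and d: "\<forall>x\<in>UNIV - {a, b}. d x = T (poly f x / (x - a))"
    and e: "e = T (poly f b / (b - a))"
  shows "repair_recover q t a b d e = poly f a"
proof -
  have traces: "T (z * poly f a) =
      - (\<Sum>x\<in>UNIV - {a, b}. T (z * (x - a)) * d x) - T (z * (b - a)) * e" for z
    using trace_repair_identity_split[OF deg \<open>a \<noteq> b\<close>, of z] d e by simp
  show ?thesis
    unfolding repair_recover_def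
  proof (rule someI2[where a = "poly f a"])
    show "\<forall>z. T (z * poly f a) =
        - (\<Sum>x\<in>UNIV - {a, b}. T (z * (x - a)) * d x) - T (z * (b - a)) * e"
      by (intro allI traces)
  next
    fix y assume y: "\<forall>z. T (z * y) =
        - (\<Sum>x\<in>UNIV - {a, b}. T (z * (x - a)) * d x) - T (z * (b - a)) * e"
    show "y = poly f a"
      by (rule trace_form_eqD) (simp only: y traces)
  qed
qed

lemma repair_scheme_recovers:
  fixes a1 a2 :: 'a
  assumes "p dvd t" and "a1 \<noteq> a2" and deg: "degree f < CARD('a) - CARD('a) div q"
  defines "d a \<equiv> \<lambda>\<beta>. if \<beta> \<in> UNIV - {a1, a2} then repair_download q t a \<beta> (poly f \<beta>) else 0"
  shows "repair_recover q t a1 a2 (d a1) (repair_relay p m q t a2 a1 (d a2)) = poly f a1"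
proof -
  have "UNIV - {a2, a1} = UNIV - {a1, a2}" by auto
  hence "\<forall>x\<in>UNIV - {a, b}. d a x = T (poly f x / (x - a))" if "{a, b} = {a1, a2}" for a b :: 'a
    using that by (simp add: d_def repair_download_def)
  thus ?thesis
    using assms(1,2) by (intro repair_recover_correct[OF _ deg] repair_relay_correct[OF _ _ deg])
      (auto simp: insert_commute)
qed

lemma distributed_repair_two_RS_code:
  assumes "p dvd t" and "a1 \<noteq> a2"
  shows "distributed_repair_two B (RS_code (CARD('a) - CARD('a) div q)) a1 a2"
proof -
  have "repair_relay p m q t a b d \<in> B" for a b d
    using prime_gt_0_nat[OF prime_p] by (simp add: repair_relay_def Let_def subfield_GF_def)
  moreover have "repair_download q t a \<beta> y \<in> B" for a \<beta> y
    by (simp add: repair_download_def trace_in_subfield)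
  moreover have "repair_recover q t a1 a2 (d a1) (repair_relay p m q t a2 a1 (d a2)) = c a1 \<and>
      repair_recover q t a2 a1 (d a2) (repair_relay p m q t a1 a2 (d a1)) = c a2"
    if c: "c \<in> RS_code (CARD('a) - CARD('a) div q)"
      and d: "d = (\<lambda>a \<beta>. if \<beta> \<in> UNIV - {a1, a2} then repair_download q t a \<beta> (c \<beta>) else 0)"
    for c d
  proof -
    obtain f where c_eq: "c = poly f" and deg: "degree f < CARD('a) - CARD('a) div q"
      using c unfolding RS_code_def by blast
    have "{a2, a1} = {a1, a2}" by auto
    thus ?thesis
      using repair_scheme_recovers[OF assms deg] repair_scheme_recovers[OF assms(1) _ deg, of a2 a1]
        assms(2) unfolding d c_eq by simp
  qed
  ultimately show ?thesis
    unfolding distributed_repair_two_def Let_def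
    by (intro exI[of _ "repair_download q t a1"] exI[of _ "repair_download q t a2"]
        exI[of _ "repair_relay p m q t a1 a2"] exI[of _ "repair_relay p m q t a2 a1"]
        exI[of _ "repair_recover q t a1 a2"] exI[of _ "repair_recover q t a2 a1"]) auto
qed

end

theorem theorem3:
  fixes p m t :: nat and a_star a_bar :: "'a::{field,finite}"
  assumes "prime p" and "m \<ge> 1" and "t \<ge> 1"
    and "CARD('a) = p ^ (m * t)"
    and "p dvd t"
    and "a_star \<noteq> a_bar"
  shows "distributed_repair_two (subfield_GF p m :: 'a set)
           (RS_code (CARD('a) - CARD('a) div p ^ m)) a_star a_bar
         \<and> repair_two_bandwidth a_star a_bar = 2 * (CARD('a) - 1)"
proof
  interpret subfield_trace p m t "p ^ m" "TYPE('a)"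
    using assms by unfold_locales auto
  show "distributed_repair_two (subfield_GF p m :: 'a set)
      (RS_code (CARD('a) - CARD('a) div p ^ m)) a_star a_bar"
    using distributed_repair_two_RS_code assms(5,6) .
  show "repair_two_bandwidth a_star a_bar = 2 * (CARD('a) - 1)"
    using repair_two_bandwidth_eq assms(6) .
qed

end
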